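(* Let $n\ge 3$ and let $G$ be a graph on $2n$ vertices with at least $n^2-1$ edges that contains no two distinct vertices of the same degree joined by a path of length three. Let $\beta$ be the largest integer such that $G$ contains two distinct vertices of degree $\beta$, and let $\Delta$ be the maximum degree of $G$. Then $3\le\beta\le\Delta$.
   Context: A path of length three joining vertices $a$ and $b$ is a path $a\,x\,y\,b$ with four distinct vertices and three edges. Graphs are finite and simple. *)

theory Defs
  imports Main
begin

definition simple_graph :: "'a set \<Rightarrow> ('a \<Rightarrow> 'a \<Rightarrow> bool) \<Rightarrow> bool" where
  "simple_graph V E \<longleftrightarrow> finite V \<and> (\<forall>u v. E u v \<longrightarrow> u \<in> V \<and> v \<in> V)
     \<and> (\<forall>u v. E u v \<longrightarrow> E v u) \<and> (\<forall>u. \<not> E u u)"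

definition degree :: "'a set \<Rightarrow> ('a \<Rightarrow> 'a \<Rightarrow> bool) \<Rightarrow> 'a \<Rightarrow> nat" where
  "degree V E v = card {u \<in> V. E v u}"

definition edges :: "'a set \<Rightarrow> ('a \<Rightarrow> 'a \<Rightarrow> bool) \<Rightarrow> 'a set set" where
  "edges V E = {{u, v} | u v. u \<in> V \<and> v \<in> V \<and> E u v}"

definition path3 :: "'a set \<Rightarrow> ('a \<Rightarrow> 'a \<Rightarrow> bool) \<Rightarrow> 'a \<Rightarrow> 'a \<Rightarrow> bool" where
  "path3 V E a b \<longleftrightarrow> (\<exists>x y. a \<in> V \<and> x \<in> V \<and> y \<in> V \<and> b \<in> V \<and>
     distinct [a, x, y, b] \<and> E a x \<and> E x y \<and> E y b)"

definition repeated_degrees :: "'a set \<Rightarrow> ('a \<Rightarrow> 'a \<Rightarrow> bool) \<Rightarrow> nat set" where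
  "repeated_degrees V E = {d. \<exists>u \<in> V. \<exists>v \<in> V. u \<noteq> v \<and> degree V E u = d \<and> degree V E v = d}"

definition max_degree :: "'a set \<Rightarrow> ('a \<Rightarrow> 'a \<Rightarrow> bool) \<Rightarrow> nat" where
  "max_degree V E = Max (degree V E ` V)"

end

theory Submission imports Defs begin

text \<open>The degree sum is at least 2(n^2-1); suppose the vertices of degree at least 3 had
  pairwise distinct degrees. If no vertex is adjacent to all others, every degree is at most
  2n-2, so the excesses d-2 of the high degrees are distinct numbers in 1..2n-4 and the degree
  sum is at most 4n + (n-2)(2n-3), too small. If some z is adjacent to all others, another
  high-degree vertex y cannot have two neighbours u, v of degree at most 2: both would have
  degree exactly 2 (being adjacent to y and z), and u y z v would be a path of length three.
  So deg y is at most the number of high-degree vertices, and distinctness leaves z as the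
  only one; then the degree sum is at most 3(2n-1), again too small.\<close>

lemma simple_graph_finite: "simple_graph V E \<Longrightarrow> finite V"
  and simple_graph_sym: "simple_graph V E \<Longrightarrow> E u v \<Longrightarrow> E v u"
  and simple_graph_irrefl: "simple_graph V E \<Longrightarrow> \<not> E u u"
  unfolding simple_graph_def by blast+

lemma degree_le_card_minus_one:
  assumes g: "simple_graph V E" and v: "v \<in> V"
  shows "degree V E v \<le> card V - 1"
proof -
  have "{u \<in> V. E v u} \<subseteq> V - {v}" using simple_graph_irrefl[OF g] by auto
  then have "degree V E v \<le> card (V - {v})"
    unfolding degree_def using simple_graph_finite[OF g] by (intro card_mono) auto
  then show ?thesis using v simple_graph_finite[OF g] by simp
qed

lemma adjacent_if_degree_eq_card_minus_one:
  assumes g: "simple_graph V E" and z: "z \<in> V" "degree V E z = card V - 1"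
    and w: "w \<in> V" "w \<noteq> z"
  shows "E z w"
proof -
  have "{u \<in> V. E z u} = V - {z}"
  proof (rule card_subset_eq)
    show "finite (V - {z})" using simple_graph_finite[OF g] by simp
    show "{u \<in> V. E z u} \<subseteq> V - {z}" using simple_graph_irrefl[OF g] by auto
    show "card {u \<in> V. E z u} = card (V - {z})"
      using z simple_graph_finite[OF g] unfolding degree_def by simp
  qed
  then show ?thesis using w by blast
qed

lemma degree_sum_eq_twice_card_edges:
  assumes g: "simple_graph V E"
  shows "(\<Sum>v\<in>V. degree V E v) = 2 * card (edges V E)"
proof -
  have fin: "finite V" using simple_graph_finite[OF g] .
  define arcs where "arcs = (SIGMA v:V. {u \<in> V. E v u})"
  define arcs_of where "arcs_of e = {p \<in> arcs. {fst p, snd p} = e}" for e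
  have "card arcs = (\<Sum>v\<in>V. degree V E v)"
    unfolding arcs_def degree_def using fin by (subst card_SigmaI) auto
  moreover have "arcs = (\<Union>e\<in>edges V E. arcs_of e)"
    unfolding arcs_def arcs_of_def edges_def by fastforce
  moreover have "card (\<Union>e\<in>edges V E. arcs_of e) = (\<Sum>e\<in>edges V E. card (arcs_of e))"
  proof (rule card_UN_disjoint)
    have "edges V E \<subseteq> Pow V" unfolding edges_def by auto
    then show "finite (edges V E)" using fin by (meson finite_Pow_iff finite_subset)
    show "\<forall>e\<in>edges V E. finite (arcs_of e)" unfolding arcs_of_def arcs_def using fin by auto
  qed (auto simp: arcs_of_def)
  moreover have "card (arcs_of e) = 2" if e_edge: "e \<in> edges V E" for e
  proof -
    obtain a b where e: "e = {a, b}" "a \<in> V" "b \<in> V" "E a b"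
      using e_edge unfolding edges_def by blast
    have "a \<noteq> b" using e simple_graph_irrefl[OF g] by auto
    moreover have "arcs_of e = {(a, b), (b, a)}"
      unfolding arcs_of_def arcs_def using e simple_graph_sym[OF g] \<open>a \<noteq> b\<close>
      by (auto simp: doubleton_eq_iff)
    ultimately show ?thesis by simp
  qed
  ultimately show ?thesis by simp
qed

lemma sum_le_if_inj_on_values_ge_3:
  fixes f :: "'a \<Rightarrow> nat"
  assumes fin: "finite V" and inj: "inj_on f {v \<in> V. 3 \<le> f v}" and bound: "\<forall>v\<in>V. f v \<le> b"
  shows "(\<Sum>v\<in>V. f v) \<le> 2 * card V + (\<Sum>d\<in>{3..b}. d - 2)"
proof -
  have "(\<Sum>v\<in>V. f v) \<le> (\<Sum>v\<in>V. 2 + (f v - 2))" by (intro sum_mono) auto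
  also have "\<dots> = 2 * card V + (\<Sum>v\<in>V. f v - 2)" by (subst sum.distrib) simp
  also have "(\<Sum>v\<in>V. f v - 2) = (\<Sum>v\<in>{v \<in> V. 3 \<le> f v}. f v - 2)"
    using fin by (intro sum.mono_neutral_right) auto
  also have "\<dots> = (\<Sum>d\<in>f ` {v \<in> V. 3 \<le> f v}. d - 2)" using inj by (simp add: sum.reindex)
  also have "\<dots> \<le> (\<Sum>d\<in>{3..b}. d - 2)" using bound by (intro sum_mono2) auto
  finally show ?thesis by simp
qed

lemma sum_atLeastAtMost_3_minus_2: "(\<Sum>d\<in>{3..2*m+2}. d - 2) = m * (2*m + 1::nat)"
proof (induction m)
  case (Suc m)
  have "{3..2 * Suc m + 2} = insert (2*m + 4) (insert (2*m + 3) {3..2*m + 2})" by auto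
  then show ?case using Suc by (simp add: algebra_simps)
qed simp

lemma singleton_if_inj_on_values_le_card:
  fixes f :: "'a \<Rightarrow> nat"
  assumes fin: "finite H" and inj: "inj_on f H" and z: "z \<in> H"
    and bounds: "\<And>y. y \<in> H \<Longrightarrow> y \<noteq> z \<Longrightarrow> 3 \<le> f y \<and> f y \<le> card H"
  shows "H = {z}"
proof -
  have "f ` (H - {z}) \<subseteq> {3..card H}" by (force dest: bounds)
  then have "card (f ` (H - {z})) \<le> card {3..card H}" by (intro card_mono) auto
  moreover have "card (f ` (H - {z})) = card H - 1"
    using inj z fin by (simp add: card_image inj_on_diff)
  moreover have "card H \<noteq> 0" using z fin by auto
  ultimately have "card H = 1" by simp
  then show ?thesis using z by (metis card_1_singletonE singletonD)
qed

lemma card_low_degree_neighbours_le_1: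
  assumes g: "simple_graph V E"
    and no_path: "\<forall>a \<in> V. \<forall>b \<in> V. a \<noteq> b \<and> degree V E a = degree V E b \<longrightarrow> \<not> path3 V E a b"
    and z: "z \<in> V" "3 \<le> degree V E z" and dominating: "\<forall>w\<in>V. w \<noteq> z \<longrightarrow> E z w"
    and y: "y \<in> V" "y \<noteq> z"
  shows "card {w \<in> V. E y w \<and> degree V E w < 3} \<le> 1"
proof (rule ccontr)
  let ?L = "{w \<in> V. E y w \<and> degree V E w < 3}"
  assume "\<not> card ?L \<le> 1"
  moreover have "finite ?L" using simple_graph_finite[OF g] by simp
  ultimately obtain u v where uv: "u \<in> ?L" "v \<in> ?L" "u \<noteq> v"
    by (auto simp: card_le_Suc0_iff_eq)
  have degree_2: "degree V E w = 2" if w: "w \<in> ?L" for w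
  proof -
    have "w \<noteq> z" using w z by auto
    then have "{z, y} \<subseteq> {x \<in> V. E w x}"
      using w y z dominating simple_graph_sym[OF g] by auto
    then have "card {z, y} \<le> degree V E w"
      unfolding degree_def using simple_graph_finite[OF g] by (intro card_mono) auto
    then show ?thesis using w y by simp
  qed
  have "u \<noteq> z" "v \<noteq> z" "u \<noteq> y" "v \<noteq> y"
    using uv z simple_graph_irrefl[OF g] by auto
  then have "path3 V E u v"
    unfolding path3_def using uv y z dominating simple_graph_sym[OF g]
    by (intro exI[of _ y] exI[of _ z]) auto
  moreover have "degree V E u = degree V E v" using degree_2[OF uv(1)] degree_2[OF uv(2)] by simp
  ultimately show False using no_path uv by auto
qed

lemma degree_le_card_high_degree_vertices:
  assumes g: "simple_graph V E"
    and no_path: "\<forall>a \<in> V. \<forall>b \<in> V. a \<noteq> b \<and> degree V E a = degree V E b \<longrightarrow> \<not> path3 V E a b"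
    and z: "z \<in> V" "3 \<le> degree V E z" and dominating: "\<forall>w\<in>V. w \<noteq> z \<longrightarrow> E z w"
    and y: "y \<in> V" "y \<noteq> z" "3 \<le> degree V E y"
  shows "degree V E y \<le> card {v \<in> V. 3 \<le> degree V E v}"
proof -
  let ?H = "{v \<in> V. 3 \<le> degree V E v}"
  let ?L = "{w \<in> V. E y w \<and> degree V E w < 3}"
  have fin: "finite ?H" "finite ?L" using simple_graph_finite[OF g] by simp_all
  have "{w \<in> V. E y w} \<subseteq> (?H - {y}) \<union> ?L" using simple_graph_irrefl[OF g] by auto
  then have "degree V E y \<le> card ((?H - {y}) \<union> ?L)"
    unfolding degree_def[of V E y] using fin by (intro card_mono) auto
  also have "\<dots> \<le> card (?H - {y}) + card ?L" by (rule card_Un_le)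
  also have "\<dots> \<le> (card ?H - 1) + 1"
    using card_low_degree_neighbours_le_1[OF g no_path z dominating y(1,2)] y fin by simp
  also have "\<dots> = card ?H"
  proof -
    have "y \<in> ?H" using y by simp
    then have "card ?H \<noteq> 0" using fin by auto
    then show ?thesis by simp
  qed
  finally show ?thesis .
qed

lemma degree_sum_le_with_dominating_vertex:
  assumes g: "simple_graph V E"
    and no_path: "\<forall>a \<in> V. \<forall>b \<in> V. a \<noteq> b \<and> degree V E a = degree V E b \<longrightarrow> \<not> path3 V E a b"
    and inj: "inj_on (degree V E) {v \<in> V. 3 \<le> degree V E v}"
    and z: "z \<in> V" "degree V E z = card V - 1" and V4: "4 \<le> card V"
  shows "(\<Sum>v\<in>V. degree V E v) \<le> 3 * (card V - 1)"
proof -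
  let ?H = "{v \<in> V. 3 \<le> degree V E v}"
  have fin: "finite V" using simple_graph_finite[OF g] .
  have z3: "3 \<le> degree V E z" using z V4 by simp
  have dominating: "\<forall>w\<in>V. w \<noteq> z \<longrightarrow> E z w"
    using adjacent_if_degree_eq_card_minus_one[OF g z] by blast
  have "?H = {z}"
    using fin inj z z3 degree_le_card_high_degree_vertices[OF g no_path z(1) z3 dominating]
    by (intro singleton_if_inj_on_values_le_card) auto
  then have low: "degree V E v \<le> 2" if "v \<in> V" "v \<noteq> z" for v
    using that by (metis (no_types, lifting) mem_Collect_eq singletonD not_less_eq_eq numeral_3_eq_3 numeral_2_eq_2)
  have "(\<Sum>v\<in>V. degree V E v) = degree V E z + (\<Sum>v\<in>V - {z}. degree V E v)"
    using z fin by (simp add: sum.remove)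
  also have "(\<Sum>v\<in>V - {z}. degree V E v) \<le> (\<Sum>v\<in>V - {z}. 2)" using low by (intro sum_mono) auto
  finally show ?thesis using z fin by simp
qed

lemma degree_sum_le_without_dominating_vertex:
  assumes g: "simple_graph V E"
    and inj: "inj_on (degree V E) {v \<in> V. 3 \<le> degree V E v}"
    and not_dominating: "\<forall>v\<in>V. degree V E v \<noteq> card V - 1"
  shows "(\<Sum>v\<in>V. degree V E v) \<le> 2 * card V + (\<Sum>d\<in>{3..card V - 2}. d - 2)"
proof (rule sum_le_if_inj_on_values_ge_3[OF simple_graph_finite[OF g] inj])
  show "\<forall>v\<in>V. degree V E v \<le> card V - 2"
  proof
    fix v assume "v \<in> V"
    then show "degree V E v \<le> card V - 2"
      using degree_le_card_minus_one[OF g] not_dominating by fastforce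
  qed
qed

lemma repeated_degree_ge_3:
  fixes V :: "'a set" and E :: "'a \<Rightarrow> 'a \<Rightarrow> bool" and n :: nat
  assumes g: "simple_graph V E" and n3: "n \<ge> 3" and card_V: "card V = 2 * n"
    and card_edges: "card (edges V E) \<ge> n\<^sup>2 - 1"
    and no_path: "\<forall>a \<in> V. \<forall>b \<in> V. a \<noteq> b \<and> degree V E a = degree V E b \<longrightarrow> \<not> path3 V E a b"
  obtains u v where "u \<in> V" "v \<in> V" "u \<noteq> v" "degree V E u = degree V E v" "3 \<le> degree V E u"
proof -
  have "\<not> inj_on (degree V E) {v \<in> V. 3 \<le> degree V E v}"
  proof
    assume inj: "inj_on (degree V E) {v \<in> V. 3 \<le> degree V E v}"
    have lower: "2 * n\<^sup>2 - 2 \<le> (\<Sum>v\<in>V. degree V E v)"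
      using degree_sum_eq_twice_card_edges[OF g] card_edges by linarith
    obtain m where m: "n = m + 3" using n3 by (metis add.commute le_iff_add)
    show False
    proof (cases "\<exists>z\<in>V. degree V E z = card V - 1")
      case True
      then obtain z where "z \<in> V" "degree V E z = card V - 1" by blast
      then have "(\<Sum>v\<in>V. degree V E v) \<le> 3 * (2 * n - 1)"
        using degree_sum_le_with_dominating_vertex[OF g no_path inj] card_V n3 by simp
      then show False using lower m by (simp add: power2_eq_square algebra_simps)
    next
      case False
      then have "(\<Sum>v\<in>V. degree V E v) \<le> 2 * card V + (\<Sum>d\<in>{3..card V - 2}. d - 2)"
        using degree_sum_le_without_dominating_vertex[OF g inj] by blast
      also have "card V - 2 = 2 * (m + 1) + 2" using card_V m by simp
      also have "(\<Sum>d\<in>{3..2 * (m + 1) + 2}. d - 2) = (m + 1) * (2 * (m + 1) + 1)"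
        by (rule sum_atLeastAtMost_3_minus_2)
      finally show False using lower m card_V by (simp add: power2_eq_square algebra_simps)
    qed
  qed
  then show thesis using that unfolding inj_on_def by blast
qed

lemma finite_repeated_degrees:
  assumes "simple_graph V E"
  shows "finite (repeated_degrees V E)"
proof (rule finite_subset)
  show "repeated_degrees V E \<subseteq> degree V E ` V" unfolding repeated_degrees_def by blast
  show "finite (degree V E ` V)" using simple_graph_finite[OF assms] by simp
qed

lemma Max_repeated_degrees_le_max_degree:
  assumes g: "simple_graph V E" and nonempty: "repeated_degrees V E \<noteq> {}"
  shows "Max (repeated_degrees V E) \<le> max_degree V E"
  unfolding max_degree_def
proof (rule Max_mono)
  show "repeated_degrees V E \<subseteq> degree V E ` V" unfolding repeated_degrees_def by blast
qed (use nonempty simple_graph_finite[OF g] in auto)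

theorem lemma3p2:
  fixes V :: "'a set" and E :: "'a \<Rightarrow> 'a \<Rightarrow> bool" and n :: nat
  assumes "simple_graph V E"
    and "n \<ge> 3"
    and "card V = 2 * n"
    and "card (edges V E) \<ge> n\<^sup>2 - 1"
    and "\<forall>a \<in> V. \<forall>b \<in> V. a \<noteq> b \<and> degree V E a = degree V E b \<longrightarrow> \<not> path3 V E a b"
  shows "repeated_degrees V E \<noteq> {} \<and>
         3 \<le> Max (repeated_degrees V E) \<and> Max (repeated_degrees V E) \<le> max_degree V E"
proof -
  obtain u v where uv: "u \<in> V" "v \<in> V" "u \<noteq> v" "degree V E u = degree V E v" "3 \<le> degree V E u"
    using repeated_degree_ge_3[OF assms] .
  then have repeated: "degree V E u \<in> repeated_degrees V E"
    unfolding repeated_degrees_def by auto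
  then have "3 \<le> Max (repeated_degrees V E)"
    using Max_ge[OF finite_repeated_degrees[OF assms(1)]] uv(5) order_trans by blast
  then show ?thesis
    using repeated Max_repeated_degrees_le_max_degree[OF assms(1)] by blast
qed

end
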